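(* Assume (A) and (D), and fix $t>0$. Let $G_t(r)=f^2(r)\exp(\widetilde Ktg(r))$, $w_t(r)=g^2(r)\exp(Ktg(r))$, $\widetilde w_t(r)=g^2(r)\exp(\widetilde Ktg(r))$. Let $\kappa,\widetilde\kappa>0$ and define $\alpha_t(u)=(f^2)^{-1}(\kappa/u)$ and $\beta_t(u)=G_t^{-1}(\widetilde\kappa/u)$ for $u$ large enough, where $G_t^{-1}$ is the inverse of $G_t$ restricted to a half-line on which $G_t$ is continuous and strictly decreasing (such a half-line exists). (a) For every $\varepsilon\in(0,1)$ there exists $r_\varepsilon>0$ with $f^2(r)\le G_t(r)\le f^{2-\varepsilon}(r)$ for $r>r_\varepsilon$; and for every $\delta>0$, $$\lim_{u\to\infty}\frac{w_t(\alpha_t(u))}{u^\delta}=\lim_{u\to\infty}\frac{\widetilde w_t(\beta_t(u))}{u^\delta}=0.$$ (b) If moreover $m=g$ satisfies, for some $\omega\ge0$, the condition: for every $c>0$ and $\lambda\ge1$, $\limsup_{s\to0^+}\frac{g(f^{-1}(cs^\lambda))}{g(f^{-1}(s))}\le\lambda^\omega$, then $$\lim_{u\to\infty}\frac{g(\beta_t(u))}{g(\alpha_t(u))}=1.$$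
   Context: Setting. Fix $d\ge1$. Let $A$ be a positive semidefinite $d\times d$ matrix and $\nu$ a symmetric Lévy measure on $\mathbb R^d\setminus\{0\}$ (positive Radon measure with $\int(1\wedge|z|^2)\,\nu(dz)<\infty$, $\nu(-B)=\nu(B)$) with $\nu(\mathbb R^d\setminus\{0\})=\infty$, absolutely continuous with density also denoted $\nu(x)$. The Lévy operator $L$ on $L^2(dx)$ is the Fourier multiplier $\widehat{Lh}(\xi)=-\Psi(\xi)\widehat h(\xi)$ with $\Psi(\xi)=\tfrac12A\xi\cdot\xi+\int(1-\cos(\xi\cdot z))\,\nu(dz)$; $\{P_t\}_{t\ge0}$ is the associated convolution semigroup, $P_th(x)=\int p_t(y-x)h(y)\,dy$ with densities $p_t$. Let $V$ be locally bounded on $\mathbb R^d$ with $V(x)\to\infty$ as $|x|\to\infty$, and let $H=-L+V$ (self-adjoint, bounded below, defined via quadratic forms on $L^2(dx)$). For $t>0$, $e^{-tH}$ has a continuous, positive, symmetric kernel $u_t(x,y)$. Let $\lambda_0=\inf\sigma(H)$ (a simple eigenvalue) and $\varphi_0$ the corresponding strictly positive, continuous, bounded eigenfunction with $\|\varphi_0\|_{L^2(dx)}=1$. Set $\mu(dx)=\varphi_0^2(x)\,dx$ (a probability measure), $q_t(x,y)=\dfrac{e^{\lambda_0t}u_t(x,y)}{\varphi_0(x)\varphi_0(y)}$ and $Q_th(x)=\int q_t(x,y)h(y)\,\mu(dy)$; $\{Q_t\}$ is a semigroup of contractions on every $L^p(\mu)$, $1\le p\le\infty$, and $q_t$ is symmetric.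 Assumption (A): there exist a strictly decreasing continuous $f:(0,\infty)\to(0,\infty)$, a strictly increasing continuous $g:[0,\infty)\to(0,\infty)$, constants $C_1,C_2\ge1$ and $R_0>0$ such that $C_1^{-1}f(|x|)\le\nu(x)\le C_1f(|x|)$ for $x\ne0$ and $C_2^{-1}g(|x|)\le V(x)\le C_2g(|x|)$ for $|x|\ge R_0$, and moreover: (A1) there is $C_3>0$ with $\int_{\{|x-y|>1,\,|y|>1\}}f(|x-y|)f(|y|)\,dy\le C_3f(|x|)$ for $|x|\ge1$; (A2) $(t,x)\mapsto p_t(x)$ is continuous on $(0,\infty)\times\mathbb R^d$ and for every $t_b>0$ there are $C_4,C_5>0$ with $p_t(x)\le C_4\big([e^{C_5t}f(|x|)]\wedge1\big)$ for $x\neq0$, $t\ge t_b$, and $\sup_{t\in(0,t_b]}\sup_{r\le|x|\le2}p_t(x)<\infty$ for every $r\in(0,1]$; (A3) there is $C_6\ge1$ with $g(r+1)\le C_6g(r)$ for $r\ge R_0$. Under (A), $f$ is a bijection of $(0,\infty)$ onto $(0,\infty)$ and $f^{-1}$, $(f^2)^{-1}$ denote the inverses. We write $f_1=f\wedge1$. Condition (D): the map $r\mapsto g(r)/|\log f(r)|$ is eventually decreasing and $\lim_{r\to\infty}g(r)/|\log f(r)|=0$. Heat kernel estimate (a known consequence of (A), used as standing input): for every $T>0$ there exist $\rho>1$, $C=C(T)>0$ and constants $K,\widetilde K>0$ independent of $T$ such that for all $x,y\in\mathbb R^d$ and $t\ge T$, $C^{-1}\max\{1,e^{\lambda_0t}\Gamma(\widetilde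 Kt,x,y)\}\le q_t(x,y)\le C\max\{1,e^{\lambda_0t}\Gamma(Kt,x,y)\}$, where $\Gamma(\tau,x,y)=\dfrac{\mathbf 1_{\{|x|,|y|>\rho\}}}{f_1(|x|)f_1(|y|)}\displaystyle\int_{\rho-1<|z|<|x|\vee|y|}f_1(|x-z|)f_1(|z-y|)e^{-\tau g(|z|)}\,dz$. Throughout, $K$ and $\widetilde K$ denote fixed constants for which this two-sided estimate holds. *)

theory Defs
  imports "HOL-Analysis.Analysis"
begin

definition Gt :: "(real \<Rightarrow> real) \<Rightarrow> (real \<Rightarrow> real) \<Rightarrow> real \<Rightarrow> real \<Rightarrow> real \<Rightarrow> real" where
  "Gt f g Kt t r = (f r)^2 * exp (Kt * t * g r)"

definition wt :: "(real \<Rightarrow> real) \<Rightarrow> real \<Rightarrow> real \<Rightarrow> real \<Rightarrow> real" where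
  "wt g K t r = (g r)^2 * exp (K * t * g r)"

definition alpha_t :: "(real \<Rightarrow> real) \<Rightarrow> real \<Rightarrow> real \<Rightarrow> real" where
  "alpha_t f \<kappa> u = inv_into {0<..} (\<lambda>r. (f r)^2) (\<kappa> / u)"

definition beta_t :: "(real \<Rightarrow> real) \<Rightarrow> (real \<Rightarrow> real) \<Rightarrow> real \<Rightarrow> real \<Rightarrow> real \<Rightarrow> real \<Rightarrow> real \<Rightarrow> real" where
  "beta_t f g Kt t R \<kappa>' u = inv_into {R..} (Gt f g Kt t) (\<kappa>' / u)"

end

theory Submission
  imports Defs "HOL-Real_Asymp.Real_Asymp"
begin

(* Condition (D) says g = o(|log f|), so in G_t = f^2 exp(c g) the factor exp(c g) is
   dominated by any negative power of f; likewise g^2 exp(a g) f^(2 delta) -> 0 for all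
   a, delta > 0.  This gives the sandwich f^2 <= G_t <= f^(2 - eps) and the eventual
   monotonicity of G_t, and, since f(alpha_t u)^2 = kappa/u and G_t(beta_t u) = kappa'/u,
   the decay of the weights w_t.  For (b) the sandwich pins beta_t u between
   f^-1(sqrt(kappa'/u)) and f^-1((kappa'/u)^(1/(2 - eps))), while
   alpha_t u = f^-1(sqrt(kappa/u)); the growth condition on g o f^-1, applied with
   lambda = 1 and lambda = 2/(2 - eps), bounds the ratio of g at these points by factors
   that tend to 1 as eps -> 0. *)

lemma sqrt_div_at_right_0: "\<kappa> > 0 \<Longrightarrow> filterlim (\<lambda>u. sqrt (\<kappa> / u)) (at_right 0) at_top"
  for \<kappa> :: real
  by real_asymp

lemma exists_two_div_powr_less:
  fixes a \<omega> :: real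
  assumes "1 < a"
  shows "\<exists>\<epsilon>. 0 < \<epsilon> \<and> \<epsilon> < 1 \<and> (2 / (2 - \<epsilon>)) powr \<omega> < a"
proof -
  have "((\<lambda>\<epsilon>. 2 / (2 - \<epsilon>)) \<longlongrightarrow> 1) (at_right (0::real))"
    by real_asymp
  then have "((\<lambda>\<epsilon>. (2 / (2 - \<epsilon>)) powr \<omega>) \<longlongrightarrow> 1 powr \<omega>) (at_right (0::real))"
    by (rule tendsto_powr) auto
  then have "eventually (\<lambda>\<epsilon>. (2 / (2 - \<epsilon>)) powr \<omega> < a) (at_right (0::real))"
    using assms by (intro order_tendstoD(2)) auto
  moreover have "eventually (\<lambda>\<epsilon>. 0 < \<epsilon> \<and> \<epsilon> < (1::real)) (at_right 0)"
    unfolding eventually_at_right_field by (intro exI[of _ 1]) auto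
  ultimately have "eventually (\<lambda>\<epsilon>. 0 < \<epsilon> \<and> \<epsilon> < 1 \<and> (2 / (2 - \<epsilon>)) powr \<omega> < a) (at_right 0)"
    by eventually_elim auto
  then show ?thesis
    using eventually_happens'[OF trivial_limit_at_right_real] by blast
qed

lemma divide_less_swap:
  fixes a b u :: real
  assumes "0 < a" "0 < b" "a / b < u"
  shows "0 < u" "a / u < b"
proof -
  show u: "0 < u"
    using assms divide_pos_pos[of a b] by linarith
  show "a / u < b"
    using assms u by (simp add: field_simps)
qed

lemma continuous_on_Gt:
  assumes "continuous_on {0<..} f" and "continuous_on {0..} g"
  shows "continuous_on {0<..} (Gt f g Kt t)"
proof -
  have "continuous_on {0<..} g"
    using assms(2) by (rule continuous_on_subset) auto
  then show ?thesis
    unfolding Gt_def by (intro continuous_intros assms(1))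
qed

lemma wt_div_powr_eq:
  assumes u: "u > 0" and y: "y > 0" and eq: "u * (y ^ 2 * exp (b * g x)) = \<kappa>"
  shows "wt g K t x / u powr \<delta>
    = g x ^ 2 * exp ((K * t + \<delta> * b) * g x) * y powr (2 * \<delta>) / \<kappa> powr \<delta>"
proof -
  have "(y ^ 2) powr \<delta> = y powr (2 * \<delta>)"
    using y by (simp add: powr_powr flip: powr_numeral)
  moreover have "exp (b * g x) powr \<delta> = exp (\<delta> * b * g x)"
    by (simp add: powr_def)
  ultimately have "\<kappa> powr \<delta> = u powr \<delta> * (y powr (2 * \<delta>) * exp (\<delta> * b * g x))"
    using u y by (simp flip: eq add: powr_mult)
  then show ?thesis
    unfolding wt_def using u y by (simp add: distrib_right exp_add field_simps)
qed

locale levy_potential_profiles =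
  fixes f g :: "real \<Rightarrow> real"
  assumes f_decr: "\<And>r s. 0 < r \<Longrightarrow> r < s \<Longrightarrow> f s < f r"
    and f_bij: "bij_betw f {0<..} {0<..}"
    and g_pos: "\<And>r. r \<ge> 0 \<Longrightarrow> g r > 0"
    and g_incr: "\<And>r s. 0 \<le> r \<Longrightarrow> r < s \<Longrightarrow> g r < g s"
    and g_over_ln_f_tendsto_0: "((\<lambda>r. g r / \<bar>ln (f r)\<bar>) \<longlongrightarrow> 0) at_top"
begin

abbreviation f_inv :: "real \<Rightarrow> real" where
  "f_inv \<equiv> inv_into {0<..} f"

lemma f_pos: "r > 0 \<Longrightarrow> f r > 0"
  using bij_betw_apply[OF f_bij] by auto

lemma f_inv_pos: "y > 0 \<Longrightarrow> f_inv y > 0"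
  using bij_betw_apply[OF bij_betw_inv_into[OF f_bij]] by auto

lemma f_f_inv: "y > 0 \<Longrightarrow> f (f_inv y) = y"
  using bij_betw_inv_into_right[OF f_bij] by auto

lemma le_f_inv: "x > 0 \<Longrightarrow> y > 0 \<Longrightarrow> y \<le> f x \<Longrightarrow> x \<le> f_inv y"
  using f_decr[of "f_inv y" x] f_inv_pos[of y] f_f_inv[of y] by force

lemma f_inv_le: "x > 0 \<Longrightarrow> y > 0 \<Longrightarrow> f x \<le> y \<Longrightarrow> f_inv y \<le> x"
  using f_decr[of x "f_inv y"] f_f_inv[of y] by force

lemma g_mono: "0 \<le> r \<Longrightarrow> r \<le> s \<Longrightarrow> g r \<le> g s"
  using g_incr[of r s] by (cases "r = s") auto

lemma f_inv_at_top: "filterlim f_inv at_top (at_right 0)"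
proof (subst filterlim_at_top, intro allI)
  fix Z :: real
  define M where "M = max Z 1"
  have fM: "f M > 0"
    using f_pos M_def by simp
  show "eventually (\<lambda>y. Z \<le> f_inv y) (at_right 0)"
    unfolding eventually_at_right[OF fM]
    using fM le_f_inv[of M] M_def by (intro exI[of _ "f M"]) force
qed

lemma f_tendsto_0: "(f \<longlongrightarrow> 0) at_top"
proof (rule order_tendstoI)
  fix a :: real assume "a < 0"
  show "eventually (\<lambda>r. a < f r) at_top"
    using eventually_gt_at_top[of 0] by eventually_elim (use f_pos \<open>a < 0\<close> in force)
next
  fix a :: real assume "0 < a"
  show "eventually (\<lambda>r. f r < a) at_top"
    using eventually_gt_at_top[of "f_inv a"]
    by eventually_elim (use f_decr f_inv_pos f_f_inv \<open>0 < a\<close> in force)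
qed

lemma f_at_right_0: "filterlim f (at_right 0) at_top"
proof (rule tendsto_imp_filterlim_at_right[OF f_tendsto_0])
  show "eventually (\<lambda>r. f r > 0) at_top"
    using eventually_gt_at_top[of 0] by eventually_elim (rule f_pos)
qed

lemma minus_ln_f_at_top: "filterlim (\<lambda>r. - ln (f r)) at_top at_top"
  using filterlim_compose[OF ln_at_0 f_at_right_0] filterlim_uminus_at_bot[of "\<lambda>r. ln (f r)"]
  by simp

lemma eventually_g_le_minus_ln_f:
  assumes a: "a > 0" and e: "e > 0"
  shows "eventually (\<lambda>r. a * g r \<le> e * - ln (f r)) at_top"
proof -
  note eventually_compose_filterlim[OF eventually_gt_at_top[of 0] minus_ln_f_at_top]
  with order_tendstoD(2)[OF g_over_ln_f_tendsto_0 divide_pos_pos[OF e a]]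
  show ?thesis
  proof eventually_elim
    case (elim r)
    then have "g r / (- ln (f r)) < e / a"
      by simp
    then have "g r < e / a * - ln (f r)"
      using pos_divide_less_eq[of "- ln (f r)" "g r" "e / a"] elim(2) by auto
    then have "a * g r < a * (e / a * - ln (f r))"
      using a by (rule mult_strict_left_mono)
    then show ?case
      using a by simp
  qed
qed

lemma Gt_eq_exp: "r > 0 \<Longrightarrow> Gt f g Kt t r = exp (2 * ln (f r) + Kt * t * g r)"
  using f_pos[of r] by (simp add: Gt_def exp_add powr_def flip: powr_numeral)

lemma power2_f_le_Gt: "0 \<le> Kt * t \<Longrightarrow> 0 \<le> r \<Longrightarrow> f r ^ 2 \<le> Gt f g Kt t r"
  using g_pos[of r] by (simp add: Gt_def mult_le_cancel_left1)

lemma eventually_Gt_le_f_powr: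
  assumes c: "Kt * t > 0" and \<epsilon>: "\<epsilon> > 0"
  shows "eventually (\<lambda>r. Gt f g Kt t r \<le> f r powr (2 - \<epsilon>)) at_top"
  using eventually_g_le_minus_ln_f[OF c \<epsilon>] eventually_gt_at_top[of 0]
proof eventually_elim
  case (elim r)
  then have "Gt f g Kt t r \<le> exp ((2 - \<epsilon>) * ln (f r))"
    using Gt_eq_exp[of r] elim by (simp add: algebra_simps)
  then show ?case
    using f_pos[of r] elim by (simp add: powr_def)
qed

lemma Gt_bounds_beyond:
  assumes c: "Kt * t > 0" and \<epsilon>: "\<epsilon> > 0"
  shows "\<exists>r\<epsilon>>0. \<forall>r>r\<epsilon>. f r ^ 2 \<le> Gt f g Kt t r \<and> Gt f g Kt t r \<le> f r powr (2 - \<epsilon>)"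
proof -
  obtain N where N: "\<And>r. r \<ge> N \<Longrightarrow> Gt f g Kt t r \<le> f r powr (2 - \<epsilon>)"
    using eventually_Gt_le_f_powr[OF c \<epsilon>] by (auto simp: eventually_at_top_linorder)
  show ?thesis
    using N power2_f_le_Gt c by (intro exI[of _ "max N 1"]) auto
qed

lemma Gt_tendsto_0:
  assumes c: "Kt * t > 0"
  shows "(Gt f g Kt t \<longlongrightarrow> 0) at_top"
proof (rule tendsto_sandwich[of "\<lambda>_. 0" _ _ f])
  show "eventually (\<lambda>r. 0 \<le> Gt f g Kt t r) at_top"
    by (simp add: Gt_def)
  show "eventually (\<lambda>r. Gt f g Kt t r \<le> f r) at_top"
    using eventually_Gt_le_f_powr[OF c zero_less_one] eventually_gt_at_top[of 0]
    by eventually_elim (simp add: f_pos less_imp_le)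
qed (simp_all add: f_tendsto_0)

lemma Gt_eventually_strict_decreasing:
  assumes c: "Kt * t > 0"
    and D_decr: "\<exists>R. \<forall>r s. R \<le> r \<longrightarrow> r \<le> s \<longrightarrow> g s / \<bar>ln (f s)\<bar> \<le> g r / \<bar>ln (f r)\<bar>"
  shows "\<exists>R>0. \<forall>r s. R \<le> r \<longrightarrow> r < s \<longrightarrow> Gt f g Kt t s < Gt f g Kt t r"
proof -
  define L where "L r = - ln (f r)" for r
  define h where "h r = g r / L r" for r
  obtain R1 where R1: "\<And>r s. R1 \<le> r \<Longrightarrow> r \<le> s \<Longrightarrow> g s / \<bar>ln (f s)\<bar> \<le> g r / \<bar>ln (f r)\<bar>"
    using D_decr by blast
  have "eventually (\<lambda>r. 0 < r \<and> 0 < L r \<and> g r / \<bar>ln (f r)\<bar> < 1 / (Kt * t)) at_top"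
    using eventually_gt_at_top[of 0]
      eventually_compose_filterlim[OF eventually_gt_at_top[of 0] minus_ln_f_at_top]
      order_tendstoD(2)[OF g_over_ln_f_tendsto_0 divide_pos_pos[OF zero_less_one c]]
    unfolding L_def by eventually_elim auto
  then obtain R2 where R2: "\<And>r. r \<ge> R2 \<Longrightarrow> 0 < r \<and> 0 < L r \<and> h r < 1 / (Kt * t)"
    unfolding eventually_at_top_linorder h_def L_def by force
  \<comment> \<open>ln G = - L (2 - c h), where L increases and h eventually decreases below 1/c\<close>
  have "Gt f g Kt t s < Gt f g Kt t r" if rs: "max 1 (max R1 R2) \<le> r" "r < s" for r s
  proof -
    have r: "0 < r" "0 < L r" "Kt * t * h r < 1" and s: "0 < s" "0 < L s"
      using R2[of r] R2[of s] rs c by (auto simp: field_simps)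
    have "L r < L s"
      using f_decr[of r s] f_pos r s rs unfolding L_def by simp
    moreover have "Kt * t * h s \<le> Kt * t * h r"
      using R1[of r s] rs r s c unfolding h_def L_def by (intro mult_left_mono) auto
    ultimately have "L r * (2 - Kt * t * h r) < L s * (2 - Kt * t * h s)"
      using r by (smt (verit) mult_strict_right_mono mult_left_mono)
    moreover have "Gt f g Kt t x = exp (- (L x * (2 - Kt * t * h x)))" if "0 < x" "0 < L x" for x
      using Gt_eq_exp[OF \<open>0 < x\<close>] that unfolding h_def L_def by (simp add: algebra_simps)
    ultimately show ?thesis
      using r s by simp
  qed
  then show ?thesis
    by (intro exI[of _ "max 1 (max R1 R2)"]) auto
qed

lemma g_exp_f_powr_tendsto_0:
  assumes a: "a > 0" and \<delta>: "\<delta> > 0"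
  shows "((\<lambda>r. g r ^ 2 * exp (a * g r) * f r powr (2 * \<delta>)) \<longlongrightarrow> 0) at_top"
proof (rule tendsto_sandwich[of "\<lambda>_. 0" _ _
    "\<lambda>r. (\<delta> / a) ^ 2 * ((- ln (f r)) ^ 2 * exp (- \<delta> * - ln (f r)))"])
  show "eventually (\<lambda>r. g r ^ 2 * exp (a * g r) * f r powr (2 * \<delta>)
      \<le> (\<delta> / a) ^ 2 * ((- ln (f r)) ^ 2 * exp (- \<delta> * - ln (f r)))) at_top"
    using eventually_g_le_minus_ln_f[OF a \<delta>] eventually_gt_at_top[of 0]
  proof eventually_elim
    case (elim r)
    then have "exp (a * g r) * f r powr (2 * \<delta>) \<le> exp (- \<delta> * - ln (f r))"
      using f_pos[of r] by (simp add: powr_def flip: exp_add)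
    moreover have "g r ^ 2 \<le> (\<delta> / a) ^ 2 * (- ln (f r)) ^ 2"
      unfolding power_mult_distrib[symmetric]
      using elim g_pos[of r] a by (intro power_mono) (auto simp: field_simps)
    ultimately have "g r ^ 2 * (exp (a * g r) * f r powr (2 * \<delta>))
        \<le> (\<delta> / a) ^ 2 * (- ln (f r)) ^ 2 * exp (- \<delta> * - ln (f r))"
      by (intro mult_mono) auto
    then show ?case
      by (simp add: mult.assoc)
  qed
  have "((\<lambda>x. x ^ 2 * exp (- \<delta> * x)) \<longlongrightarrow> 0) at_top"
    using \<delta> by real_asymp
  then have "((\<lambda>x. (\<delta> / a) ^ 2 * (x ^ 2 * exp (- \<delta> * x))) \<longlongrightarrow> 0) at_top"
    by (rule tendsto_mult_right_zero)
  then show "((\<lambda>r. (\<delta> / a) ^ 2 * ((- ln (f r)) ^ 2 * exp (- \<delta> * - ln (f r)))) \<longlongrightarrow> 0) at_top"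
    by (rule filterlim_compose[OF _ minus_ln_f_at_top])
qed auto

lemma alpha_t_eq:
  assumes "\<kappa> > 0" "u > 0"
  shows "alpha_t f \<kappa> u = f_inv (sqrt (\<kappa> / u))"
proof -
  have inj: "inj_on (\<lambda>r. f r ^ 2) {0<..}"
  proof (rule inj_onI)
    fix a b :: real assume "a \<in> {0<..}" "b \<in> {0<..}" "f a ^ 2 = f b ^ 2"
    then show "a = b"
      using f_pos[of a] f_pos[of b] inj_onD[OF bij_betw_imp_inj_on[OF f_bij]]
      by (simp add: power2_eq_iff_nonneg)
  qed
  have "sqrt (\<kappa> / u) > 0"
    using assms by simp
  then show ?thesis
    unfolding alpha_t_def
    using assms f_inv_pos f_f_inv[of "sqrt (\<kappa> / u)"] by (intro inv_into_f_eq[OF inj]) auto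
qed

lemma wt_alpha_t_tendsto_0:
  assumes \<kappa>: "\<kappa> > 0" and "K * t > 0" "\<delta> > 0"
  shows "((\<lambda>u. wt g K t (alpha_t f \<kappa> u) / u powr \<delta>) \<longlongrightarrow> 0) at_top"
proof -
  let ?\<alpha> = "\<lambda>u. f_inv (sqrt (\<kappa> / u))"
  have "filterlim ?\<alpha> at_top at_top"
    by (rule filterlim_compose[OF f_inv_at_top sqrt_div_at_right_0[OF \<kappa>]])
  then have "((\<lambda>u. g (?\<alpha> u) ^ 2 * exp (K * t * g (?\<alpha> u)) * f (?\<alpha> u) powr (2 * \<delta>)
      / \<kappa> powr \<delta>) \<longlongrightarrow> 0) at_top"
    using filterlim_compose[OF g_exp_f_powr_tendsto_0[OF assms(2,3)]] tendsto_divide_zero by blast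
  moreover have "eventually (\<lambda>u. g (?\<alpha> u) ^ 2 * exp (K * t * g (?\<alpha> u)) * f (?\<alpha> u) powr (2 * \<delta>)
      / \<kappa> powr \<delta> = wt g K t (alpha_t f \<kappa> u) / u powr \<delta>) at_top"
    using eventually_gt_at_top[of 0]
  proof eventually_elim
    case (elim u)
    have eq: "u * (f (?\<alpha> u) ^ 2 * exp (0 * g (?\<alpha> u))) = \<kappa>"
      using f_f_inv[of "sqrt (\<kappa> / u)"] elim \<kappa> by simp
    have pos: "f (?\<alpha> u) > 0"
      using elim \<kappa> by (simp add: f_pos f_inv_pos)
    show ?case
      using wt_div_powr_eq[where g = g and x = "?\<alpha> u", OF elim pos eq] alpha_t_eq[OF \<kappa> elim] by simp
  qed
  ultimately show ?thesis
    by (rule Lim_transform_eventually)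
qed

definition g_f_inv_growth :: "real \<Rightarrow> bool" where
  "g_f_inv_growth \<omega> \<longleftrightarrow> (\<forall>c>0. \<forall>lam\<ge>1.
     Limsup (at_right 0) (\<lambda>s. ereal (g (f_inv (c * s powr lam)) / g (f_inv s)))
       \<le> ereal (lam powr \<omega>))"

lemma eventually_g_f_inv_ratio_less:
  assumes "g_f_inv_growth \<omega>" "c > 0" "lam \<ge> 1" "lam powr \<omega> < B" "\<kappa> > 0"
  shows "eventually (\<lambda>u. g (f_inv (c * sqrt (\<kappa> / u) powr lam)) / g (f_inv (sqrt (\<kappa> / u))) < B) at_top"
proof -
  have "Limsup (at_right 0) (\<lambda>s. ereal (g (f_inv (c * s powr lam)) / g (f_inv s)))
      \<le> ereal (lam powr \<omega>)"
    using assms(1-3) unfolding g_f_inv_growth_def by blast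
  also have "\<dots> < ereal B"
    using assms(4) by simp
  finally have "eventually (\<lambda>s. ereal (g (f_inv (c * s powr lam)) / g (f_inv s)) < ereal B) (at_right 0)"
    by (rule Limsup_lessD)
  then show ?thesis
    using eventually_compose_filterlim[OF _ sqrt_div_at_right_0[OF assms(5)]] by simp
qed

end

locale Gt_half_line = levy_potential_profiles +
  fixes Kt t R \<kappa>' :: real
  assumes Kt_t_pos: "Kt * t > 0" and R_pos: "R > 0" and \<kappa>'_pos: "\<kappa>' > 0"
    and Gt_cont: "continuous_on {R..} (Gt f g Kt t)"
    and Gt_decr: "\<And>r s. R \<le> r \<Longrightarrow> r < s \<Longrightarrow> Gt f g Kt t s < Gt f g Kt t r"
begin

abbreviation G :: "real \<Rightarrow> real" where
  "G \<equiv> Gt f g Kt t"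

abbreviation beta :: "real \<Rightarrow> real" where
  "beta \<equiv> beta_t f g Kt t R \<kappa>'"

lemma G_pos: "r > 0 \<Longrightarrow> G r > 0"
  using f_pos[of r] by (simp add: Gt_def)

lemma eventually_G_beta_t: "eventually (\<lambda>u. R \<le> beta u \<and> G (beta u) = \<kappa>' / u) at_top"
  using eventually_gt_at_top[of "\<kappa>' / G R"]
proof eventually_elim
  case (elim u)
  have u: "0 < u" and GR: "\<kappa>' / u < G R"
    using divide_less_swap[OF \<kappa>'_pos G_pos[OF R_pos] elim] by auto
  obtain N where N: "\<And>r. r \<ge> N \<Longrightarrow> G r < \<kappa>' / u"
    using order_tendstoD(2)[OF Gt_tendsto_0[OF Kt_t_pos], of "\<kappa>' / u"] \<kappa>'_pos u
    by (auto simp: eventually_at_top_linorder)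
  note less_imp_le[OF N[OF max.cobounded1]] less_imp_le[OF GR] max.cobounded2
  moreover have "continuous_on {R..max N R} G"
    by (rule continuous_on_subset[OF Gt_cont]) auto
  ultimately have "\<exists>x. R \<le> x \<and> x \<le> max N R \<and> G x = \<kappa>' / u"
    by (rule IVT2')
  then obtain x where "x \<in> {R..}" "\<kappa>' / u = G x"
    by auto
  then have img: "\<kappa>' / u \<in> G ` {R..}"
    by (rule rev_image_eqI)
  show ?case
    unfolding beta_t_def using inv_into_into[OF img] f_inv_into_f[OF img] by simp
qed

lemma beta_t_at_top: "filterlim beta at_top at_top"
proof (subst filterlim_at_top, intro allI)
  fix Z :: real
  define M where "M = max Z R"
  have GM: "G M > 0"
    using G_pos R_pos M_def by simp
  show "eventually (\<lambda>u. Z \<le> beta u) at_top"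
    using eventually_G_beta_t eventually_gt_at_top[of "\<kappa>' / G M"]
  proof eventually_elim
    case (elim u)
    then have "G (beta u) < G M"
      using divide_less_swap[OF \<kappa>'_pos GM] by simp
    then have "M \<le> beta u"
      using Gt_decr[of "beta u" M] elim by (cases "M \<le> beta u") auto
    then show ?case
      using M_def by simp
  qed
qed

lemma wt_beta_t_tendsto_0:
  assumes \<delta>: "\<delta> > 0"
  shows "((\<lambda>u. wt g Kt t (beta u) / u powr \<delta>) \<longlongrightarrow> 0) at_top"
proof -
  have a: "Kt * t + \<delta> * (Kt * t) > 0"
    using add_pos_pos[OF Kt_t_pos mult_pos_pos[OF \<delta> Kt_t_pos]] .
  have "((\<lambda>u. g (beta u) ^ 2 * exp ((Kt * t + \<delta> * (Kt * t)) * g (beta u))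
      * f (beta u) powr (2 * \<delta>) / \<kappa>' powr \<delta>) \<longlongrightarrow> 0) at_top"
    using filterlim_compose[OF g_exp_f_powr_tendsto_0[OF a \<delta>] beta_t_at_top]
      tendsto_divide_zero by blast
  moreover have "eventually (\<lambda>u. g (beta u) ^ 2 * exp ((Kt * t + \<delta> * (Kt * t)) * g (beta u))
      * f (beta u) powr (2 * \<delta>) / \<kappa>' powr \<delta> = wt g Kt t (beta u) / u powr \<delta>) at_top"
    using eventually_G_beta_t eventually_gt_at_top[of 0]
  proof eventually_elim
    case (elim u)
    have eq: "u * (f (beta u) ^ 2 * exp (Kt * t * g (beta u))) = \<kappa>'"
      using elim unfolding Gt_def by (simp add: field_simps)
    have pos: "f (beta u) > 0"
      using elim R_pos by (simp add: f_pos)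
    show ?case
      using wt_div_powr_eq[where g = g and x = "beta u", OF elim(2) pos eq] by simp
  qed
  ultimately show ?thesis
    by (rule Lim_transform_eventually)
qed

lemma eventually_f_inv_le_beta_t: "eventually (\<lambda>u. f_inv (sqrt (\<kappa>' / u)) \<le> beta u) at_top"
  using eventually_G_beta_t eventually_gt_at_top[of 0]
proof eventually_elim
  case (elim u)
  then have "f (beta u) ^ 2 \<le> \<kappa>' / u"
    using power2_f_le_Gt[of Kt t "beta u"] Kt_t_pos R_pos by auto
  then have "f (beta u) \<le> sqrt (\<kappa>' / u)"
    by (rule real_le_rsqrt)
  then show ?case
    using f_inv_le[of "beta u"] elim R_pos \<kappa>'_pos by auto
qed

lemma eventually_beta_t_le_f_inv:
  assumes "0 < \<epsilon>" "\<epsilon> < 2"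
  shows "eventually (\<lambda>u. beta u \<le> f_inv ((\<kappa>' / u) powr (1 / (2 - \<epsilon>)))) at_top"
  using eventually_compose_filterlim[OF eventually_Gt_le_f_powr[OF Kt_t_pos assms(1)] beta_t_at_top]
    eventually_G_beta_t eventually_gt_at_top[of 0]
proof eventually_elim
  case (elim u)
  have fb: "f (beta u) > 0"
    using elim R_pos by (simp add: f_pos)
  have "(\<kappa>' / u) powr (1 / (2 - \<epsilon>)) \<le> (f (beta u) powr (2 - \<epsilon>)) powr (1 / (2 - \<epsilon>))"
    using elim \<kappa>'_pos assms by (intro powr_mono2) auto
  also have "\<dots> = f (beta u)"
    using assms fb by (simp add: powr_powr)
  finally show ?case
    using le_f_inv[of "beta u"] elim R_pos \<kappa>'_pos by auto
qed

lemma eventually_g_beta_t_div_g_alpha_t_gt: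
  assumes growth: "g_f_inv_growth \<omega>" and \<kappa>: "\<kappa> > 0" and "a < 1"
  shows "eventually (\<lambda>u. a < g (beta u) / g (alpha_t f \<kappa> u)) at_top"
proof -
  have g_alpha: "g (alpha_t f \<kappa> u) > 0" if "u > 0" for u
    using alpha_t_eq[OF \<kappa> that] f_inv_pos[of "sqrt (\<kappa> / u)"] \<kappa> that by (simp add: g_pos)
  show ?thesis
  proof (cases "a \<le> 0")
    case True
    show ?thesis
      using eventually_G_beta_t eventually_gt_at_top[of 0]
    proof eventually_elim
      case (elim u)
      then have "0 < g (beta u) / g (alpha_t f \<kappa> u)"
        using g_alpha[of u] g_pos[of "beta u"] R_pos by simp
      then show ?case
        using True by linarith
    qed
  next
    case False
    have "1 powr \<omega> < 1 / a"
      using False \<open>a < 1\<close> by (simp add: field_simps)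
    then have "eventually (\<lambda>u. g (f_inv (sqrt (\<kappa> / \<kappa>') * sqrt (\<kappa>' / u) powr 1))
        / g (f_inv (sqrt (\<kappa>' / u))) < 1 / a) at_top"
      using \<kappa> \<kappa>'_pos by (intro eventually_g_f_inv_ratio_less[OF growth]) auto
    then show ?thesis
      using eventually_f_inv_le_beta_t eventually_gt_at_top[of 0]
    proof eventually_elim
      case (elim u)
      have "sqrt (\<kappa> / \<kappa>') * sqrt (\<kappa>' / u) powr 1 = sqrt (\<kappa> / u)"
        using elim \<kappa> \<kappa>'_pos by (simp add: real_sqrt_mult[symmetric])
      then have "g (alpha_t f \<kappa> u) < 1 / a * g (f_inv (sqrt (\<kappa>' / u)))"
        using elim alpha_t_eq[OF \<kappa>] \<kappa>'_pos f_inv_pos[of "sqrt (\<kappa>' / u)"] g_pos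
        by (simp add: divide_less_eq)
      also have "\<dots> \<le> 1 / a * g (beta u)"
        using elim False \<kappa>'_pos f_inv_pos[of "sqrt (\<kappa>' / u)"]
        by (intro mult_left_mono g_mono) auto
      finally show ?case
        using False g_alpha[of u] elim by (simp add: field_simps)
    qed
  qed
qed

lemma eventually_g_beta_t_div_g_alpha_t_lt:
  assumes growth: "g_f_inv_growth \<omega>" and \<kappa>: "\<kappa> > 0" and "1 < a"
  shows "eventually (\<lambda>u. g (beta u) / g (alpha_t f \<kappa> u) < a) at_top"
proof -
  obtain \<epsilon> where \<epsilon>: "0 < \<epsilon>" "\<epsilon> < 1" and less: "(2 / (2 - \<epsilon>)) powr \<omega> < a"
    using exists_two_div_powr_less[OF \<open>1 < a\<close>] by blast
  define p where "p = 1 / (2 - \<epsilon>)"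
  have lam: "1 \<le> 2 / (2 - \<epsilon>)"
    using \<epsilon> by (simp add: field_simps)
  have c: "(\<kappa>' / \<kappa>) powr p > 0"
    using \<kappa> \<kappa>'_pos by simp
  have "eventually (\<lambda>u. g (f_inv ((\<kappa>' / \<kappa>) powr p * sqrt (\<kappa> / u) powr (2 / (2 - \<epsilon>))))
      / g (f_inv (sqrt (\<kappa> / u))) < a) at_top"
    by (rule eventually_g_f_inv_ratio_less[OF growth c lam less \<kappa>])
  moreover have "eventually (\<lambda>u. beta u \<le> f_inv ((\<kappa>' / u) powr p)) at_top"
    using eventually_beta_t_le_f_inv[of \<epsilon>] \<epsilon> unfolding p_def by simp
  ultimately show ?thesis
    using eventually_G_beta_t eventually_gt_at_top[of 0]
  proof eventually_elim
    case (elim u)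
    \<comment> \<open>the constant (kappa'/kappa)^p is chosen so that the two powers of u match\<close>
    have "sqrt (\<kappa> / u) powr (2 / (2 - \<epsilon>)) = (\<kappa> / u) powr p"
      using elim \<kappa> by (simp add: p_def powr_half_sqrt[symmetric] powr_powr)
    then have eq: "(\<kappa>' / \<kappa>) powr p * sqrt (\<kappa> / u) powr (2 / (2 - \<epsilon>)) = (\<kappa>' / u) powr p"
      using elim \<kappa> \<kappa>'_pos by (simp add: powr_mult[symmetric])
    have "g (beta u) \<le> g (f_inv ((\<kappa>' / u) powr p))"
      using elim R_pos by (intro g_mono) auto
    also have "\<dots> < a * g (alpha_t f \<kappa> u)"
      using elim eq alpha_t_eq[OF \<kappa>] f_inv_pos[of "sqrt (\<kappa> / u)"] \<kappa> g_pos
      by (simp add: divide_less_eq)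
    finally show ?case
      using elim alpha_t_eq[OF \<kappa>] f_inv_pos[of "sqrt (\<kappa> / u)"] \<kappa> g_pos
      by (simp add: divide_less_eq)
  qed
qed

lemma g_beta_t_div_g_alpha_t_tendsto_1:
  assumes "g_f_inv_growth \<omega>" and "\<kappa> > 0"
  shows "((\<lambda>u. g (beta u) / g (alpha_t f \<kappa> u)) \<longlongrightarrow> 1) at_top"
  using assms by (intro order_tendstoI eventually_g_beta_t_div_g_alpha_t_gt eventually_g_beta_t_div_g_alpha_t_lt)

end

theorem lemma4p2:
  fixes f g :: "real \<Rightarrow> real"
    and K Kt t \<kappa> \<kappa>' C3 C6 R0 :: real
  assumes f_pos: "\<And>r. r > 0 \<Longrightarrow> f r > 0"
    and f_decr: "\<And>r s. 0 < r \<Longrightarrow> r < s \<Longrightarrow> f s < f r"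
    and f_cont: "continuous_on {0<..} f"
    and f_bij: "bij_betw f {0<..} {0<..}"
    and g_pos: "\<And>r. r \<ge> 0 \<Longrightarrow> g r > 0"
    and g_incr: "\<And>r s. 0 \<le> r \<Longrightarrow> r < s \<Longrightarrow> g r < g s"
    and g_cont: "continuous_on {0..} g"
    and g_infty: "filterlim g at_top at_top"
    and A1: "C3 > 0 \<and> (\<forall>x::'d::euclidean_space. norm x \<ge> 1 \<longrightarrow>
              (\<integral>\<^sup>+ y. indicator {y. norm (x - y) > 1 \<and> norm y > 1} y
                  * ennreal (f (norm (x - y)) * f (norm y)) \<partial>lborel)
              \<le> ennreal (C3 * f (norm x)))"
    and A3: "R0 > 0" "C6 \<ge> 1" "\<And>r. r \<ge> R0 \<Longrightarrow> g (r + 1) \<le> C6 * g r"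
    and D_decr: "\<exists>R. \<forall>r s. R \<le> r \<longrightarrow> r \<le> s \<longrightarrow>
                     g s / \<bar>ln (f s)\<bar> \<le> g r / \<bar>ln (f r)\<bar>"
    and D_lim: "((\<lambda>r. g r / \<bar>ln (f r)\<bar>) \<longlongrightarrow> 0) at_top"
    and K_pos: "K > 0" and Kt_pos: "Kt > 0"
    and t_pos: "t > 0"
    and kappa_pos: "\<kappa> > 0" and kappa'_pos: "\<kappa>' > 0"
  shows
    \<comment> \<open>(a), first part\<close>
    "(\<forall>\<epsilon>. 0 < \<epsilon> \<and> \<epsilon> < 1 \<longrightarrow> (\<exists>r\<epsilon>>0. \<forall>r>r\<epsilon>.
        (f r)^2 \<le> Gt f g Kt t r \<and> Gt f g Kt t r \<le> f r powr (2 - \<epsilon>)))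
   \<comment> \<open>existence of a half-line on which G_t is continuous and strictly decreasing\<close>
   \<and> (\<exists>R>0. continuous_on {R..} (Gt f g Kt t) \<and>
        (\<forall>r s. R \<le> r \<longrightarrow> r < s \<longrightarrow> Gt f g Kt t s < Gt f g Kt t r))
   \<comment> \<open>(a), second part, for any such half-line\<close>
   \<and> (\<forall>R>0. continuous_on {R..} (Gt f g Kt t) \<and>
        (\<forall>r s. R \<le> r \<longrightarrow> r < s \<longrightarrow> Gt f g Kt t s < Gt f g Kt t r) \<longrightarrow>
      (\<forall>\<delta>>0.
        ((\<lambda>u. wt g K t (alpha_t f \<kappa> u) / u powr \<delta>) \<longlongrightarrow> 0) at_top \<and>
        ((\<lambda>u. wt g Kt t (beta_t f g Kt t R \<kappa>' u) / u powr \<delta>) \<longlongrightarrow> 0) at_top)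
   \<comment> \<open>(b)\<close>
      \<and> ((\<exists>\<omega>\<ge>0. \<forall>c>0. \<forall>lam\<ge>1.
            Limsup (at_right 0)
              (\<lambda>s. ereal (g (inv_into {0<..} f (c * s powr lam)) / g (inv_into {0<..} f s)))
            \<le> ereal (lam powr \<omega>))
          \<longrightarrow> ((\<lambda>u. g (beta_t f g Kt t R \<kappa>' u) / g (alpha_t f \<kappa> u)) \<longlongrightarrow> 1) at_top))"
proof -
  interpret levy_potential_profiles f g
    using f_decr f_bij g_pos g_incr D_lim by unfold_locales
  have c: "Kt * t > 0" and c': "K * t > 0"
    using Kt_pos K_pos t_pos by simp_all
  have cont: "continuous_on {R..} (Gt f g Kt t)" if "R > 0" for R
    using continuous_on_Gt[OF f_cont g_cont] by (rule continuous_on_subset) (use that in auto)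
  have half_line: "Gt_half_line f g Kt t R \<kappa>'"
    if "R > 0" "continuous_on {R..} (Gt f g Kt t)"
      "\<forall>r s. R \<le> r \<longrightarrow> r < s \<longrightarrow> Gt f g Kt t s < Gt f g Kt t r" for R
    using that c kappa'_pos by unfold_locales auto
  show ?thesis
    apply (intro conjI allI impI)
    subgoal using Gt_bounds_beyond[OF c] by blast
    subgoal using Gt_eventually_strict_decreasing[OF c D_decr] cont by blast
    subgoal using wt_alpha_t_tendsto_0[OF kappa_pos c'] by blast
    subgoal using Gt_half_line.wt_beta_t_tendsto_0[OF half_line] by blast
    subgoal using Gt_half_line.g_beta_t_div_g_alpha_t_tendsto_1[OF half_line _ kappa_pos]
      unfolding g_f_inv_growth_def by blast
    done
qed

end
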